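(* Let $(x_1,y_1),\dots,(x_n,y_n)\in\mathbb{R}^d\times\mathbb{R}^k$, $r\in\{1,\dots,n\}$, and let $\{f_\theta:\mathbb{R}^d\to\mathbb{R}^k\}_{\theta\in\Theta}$ be a parametric family of predictors. Consider $$\text{(A)}\quad \min\ \frac1n\sum_{i=1}^n\mathrm{Vol}\big(\mathbb{B}(p,M(x_i),f_\theta(x_i))\big)\quad\text{s.t.}\ M(\cdot)\succcurlyeq 0,\ p>0,\ \theta\in\Theta,\ \mathrm{Card}\{i\in[n]: \|M(x_i)(y_i-f_\theta(x_i))\|_p\le 1\}\ge n-r+1,$$ where $M(\cdot)$ ranges over functions from $\mathbb{R}^d$ to symmetric positive semidefinite $k\times k$ matrices, and $$\text{(B)}\quad \min\ \log\Big(\sum_{i=1}^n\frac{1}{\det(\Lambda(x_i))}\Big)+k\log\sigma_r\{\|\Lambda(x_i)(y_i-f_\theta(x_i))\|_p\}+\log\lambda(B_{\|\cdot\|_p}(1))\quad\text{s.t.}\ \Lambda(\cdot)\succcurlyeq 0,\ p>0,\ \theta\in\Theta,$$ with $\Lambda(\cdot)$ ranging over the same class of functions. Then (A) and (B) are equivalent, and an optimal $M^\star(\cdot)$ for (A) is recovered from an optimal solution $(\Lambda^\star(\cdot),p^\star,\theta^\star)$ of (B) as $$M^\star(x)=\sigma_r\{\|\Lambda^\star(x_i)(y_i-f_{\theta^\star}(x_i))\|_{p^\star}\}^{-1}\Lambda^\star(x).$$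
   Context: For $p>0$, $\|z\|_p=(\sum_j|z_j|^p)^{1/p}$. For a symmetric positive semidefinite $M\in\mathbb{R}^{k\times k}$ and $c\in\mathbb{R}^k$, $\mathbb{B}(p,M,c)=\{y\in\mathbb{R}^k:\|M(y-c)\|_p\le 1\}$, whose Lebesgue measure is $\mathrm{Vol}(\mathbb{B}(p,M,c))=\lambda(B_{\|\cdot\|_p}(1))\det(M)^{-1}$ ($+\infty$ if $M$ singular), where $\lambda(B_{\|\cdot\|_p}(1))=\frac{2^k\Gamma(1+1/p)^k}{\Gamma(1+k/p)}$. For reals $a_1,\dots,a_n$, $\sigma_r\{a_i\}$ denotes the $r$-th largest of them. $[n]=\{1,\dots,n\}$. *)

theory Defs
  imports "HOL-Analysis.Analysis"
begin

definition pnorm :: "real \<Rightarrow> real^'k \<Rightarrow> real" where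
  "pnorm p z = (\<Sum>j\<in>UNIV. \<bar>z $ j\<bar> powr p) powr (1 / p)"

text \<open>Lebesgue measure of the unit p-ball in R^k.\<close>
definition unit_ball_vol :: "real \<Rightarrow> nat \<Rightarrow> real" where
  "unit_ball_vol p k = 2 ^ k * Gamma (1 + 1 / p) ^ k / Gamma (1 + real k / p)"

definition psd :: "real^'k^'k \<Rightarrow> bool" where
  "psd A \<longleftrightarrow> transpose A = A \<and> (\<forall>v. 0 \<le> v \<bullet> (A *v v))"

text \<open>Vol(B(p,M,c)) = lambda(B_p(1)) * det(M)^(-1), +infinity if M singular
  (formula given in the paper's context, for M symmetric PSD).\<close>
definition vol_ball :: "real \<Rightarrow> real^'k^'k \<Rightarrow> real^'k \<Rightarrow> ereal" where
  "vol_ball p M c = (if det M = 0 then \<infinity> else ereal (unit_ball_vol p CARD('k) / det M))"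

text \<open>sigma_r of a list of reals: the r-th largest entry (r counted from 1).\<close>
definition kth_largest :: "nat \<Rightarrow> real list \<Rightarrow> real" where
  "kth_largest r as = rev (sort as) ! (r - 1)"

definition sigma_res ::
  "('t \<Rightarrow> real^'d \<Rightarrow> real^'k) \<Rightarrow> (nat \<Rightarrow> real^'d) \<Rightarrow> (nat \<Rightarrow> real^'k) \<Rightarrow> nat \<Rightarrow> nat
    \<Rightarrow> (real^'d \<Rightarrow> real^'k^'k) \<Rightarrow> real \<Rightarrow> 't \<Rightarrow> real" where
  "sigma_res f x y n r L p \<theta> =
     kth_largest r (map (\<lambda>i. pnorm p (L (x i) *v (y i - f \<theta> (x i)))) [1..<n+1])"

definition feasA ::
  "'t set \<Rightarrow> ('t \<Rightarrow> real^'d \<Rightarrow> real^'k) \<Rightarrow> (nat \<Rightarrow> real^'d) \<Rightarrow> (nat \<Rightarrow> real^'k) \<Rightarrow> nat \<Rightarrow> nat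
    \<Rightarrow> (real^'d \<Rightarrow> real^'k^'k) \<Rightarrow> real \<Rightarrow> 't \<Rightarrow> bool" where
  "feasA \<Theta> f x y n r M p \<theta> \<longleftrightarrow>
     (\<forall>z. psd (M z)) \<and> 0 < p \<and> \<theta> \<in> \<Theta> \<and>
     n - r + 1 \<le> card {i\<in>{1..n}. pnorm p (M (x i) *v (y i - f \<theta> (x i))) \<le> 1}"

definition objA ::
  "('t \<Rightarrow> real^'d \<Rightarrow> real^'k) \<Rightarrow> (nat \<Rightarrow> real^'d) \<Rightarrow> nat
    \<Rightarrow> (real^'d \<Rightarrow> real^'k^'k) \<Rightarrow> real \<Rightarrow> 't \<Rightarrow> ereal" where
  "objA f x n M p \<theta> = ereal (1 / real n) * (\<Sum>i\<in>{1..n}. vol_ball p (M (x i)) (f \<theta> (x i)))"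

definition optA ::
  "'t set \<Rightarrow> ('t \<Rightarrow> real^'d \<Rightarrow> real^'k) \<Rightarrow> (nat \<Rightarrow> real^'d) \<Rightarrow> (nat \<Rightarrow> real^'k) \<Rightarrow> nat \<Rightarrow> nat
    \<Rightarrow> (real^'d \<Rightarrow> real^'k^'k) \<Rightarrow> real \<Rightarrow> 't \<Rightarrow> bool" where
  "optA \<Theta> f x y n r M p \<theta> \<longleftrightarrow> feasA \<Theta> f x y n r M p \<theta> \<and>
     (\<forall>M' p' \<theta>'. feasA \<Theta> f x y n r M' p' \<theta>' \<longrightarrow> objA f x n M p \<theta> \<le> objA f x n M' p' \<theta>')"

definition valA ::
  "'t set \<Rightarrow> ('t \<Rightarrow> real^'d \<Rightarrow> real^'k) \<Rightarrow> (nat \<Rightarrow> real^'d) \<Rightarrow> (nat \<Rightarrow> real^'k) \<Rightarrow> nat \<Rightarrow> nat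
    \<Rightarrow> ereal" where
  "valA \<Theta> f x y n r = (INF (M, p, \<theta>)\<in>{(M, p, \<theta>). feasA \<Theta> f x y n r M p \<theta>}. objA f x n M p \<theta>)"

text \<open>Problem (B).  Conventions: if some det(Lambda(x_i)) = 0 the first log term is +infinity and
  the objective is +infinity; otherwise if sigma_r = 0 the objective is -infinity.\<close>
definition feasB ::
  "'t set \<Rightarrow> (real^'d \<Rightarrow> real^'k^'k) \<Rightarrow> real \<Rightarrow> 't \<Rightarrow> bool" where
  "feasB \<Theta> L p \<theta> \<longleftrightarrow> (\<forall>z. psd (L z)) \<and> 0 < p \<and> \<theta> \<in> \<Theta>"

definition objB ::
  "('t \<Rightarrow> real^'d \<Rightarrow> real^'k) \<Rightarrow> (nat \<Rightarrow> real^'d) \<Rightarrow> (nat \<Rightarrow> real^'k) \<Rightarrow> nat \<Rightarrow> nat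
    \<Rightarrow> (real^'d \<Rightarrow> real^'k^'k) \<Rightarrow> real \<Rightarrow> 't \<Rightarrow> ereal" where
  "objB f x y n r L p \<theta> =
     (if \<exists>i\<in>{1..n}. det (L (x i)) = 0 then \<infinity>
      else if sigma_res f x y n r L p \<theta> = 0 then -\<infinity>
      else ereal (ln (\<Sum>i\<in>{1..n}. 1 / det (L (x i)))
                  + real CARD('k) * ln (sigma_res f x y n r L p \<theta>)
                  + ln (unit_ball_vol p CARD('k))))"

definition optB ::
  "'t set \<Rightarrow> ('t \<Rightarrow> real^'d \<Rightarrow> real^'k) \<Rightarrow> (nat \<Rightarrow> real^'d) \<Rightarrow> (nat \<Rightarrow> real^'k) \<Rightarrow> nat \<Rightarrow> nat
    \<Rightarrow> (real^'d \<Rightarrow> real^'k^'k) \<Rightarrow> real \<Rightarrow> 't \<Rightarrow> bool" where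
  "optB \<Theta> f x y n r L p \<theta> \<longleftrightarrow> feasB \<Theta> L p \<theta> \<and>
     (\<forall>L' p' \<theta>'. feasB \<Theta> L' p' \<theta>' \<longrightarrow> objB f x y n r L p \<theta> \<le> objB f x y n r L' p' \<theta>')"

definition valB ::
  "'t set \<Rightarrow> ('t \<Rightarrow> real^'d \<Rightarrow> real^'k) \<Rightarrow> (nat \<Rightarrow> real^'d) \<Rightarrow> (nat \<Rightarrow> real^'k) \<Rightarrow> nat \<Rightarrow> nat
    \<Rightarrow> ereal" where
  "valB \<Theta> f x y n r = (INF (L, p, \<theta>)\<in>{(L, p, \<theta>). feasB \<Theta> L p \<theta>}. objB f x y n r L p \<theta>)"

end

theory Submission
  imports Defs
begin

text \<open>Scaling Lambda by c > 0 multiplies every residual norm, hence sigma_r, by c and every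
  determinant by c^k. Requiring at least n - r + 1 residuals of norm at most 1 says exactly that
  sigma_r <= 1. So a Lambda with sigma_r > 0, rescaled by 1/sigma_r, is feasible for (A) with mean
  volume lambda(B_p(1)) sigma_r^k (sum_i 1/det Lambda(x_i)) / n, which is exp of the objective of
  (B) divided by n; conversely a feasible M of (A) has sigma_r <= 1, so its mean volume is at least
  this quantity. If sigma_r = 0, the (B)-objective is -infinity, and scaling Lambda up keeps it
  feasible for (A) while the volumes tend to 0.\<close>

lemma det_scaleR: "det (c *\<^sub>R (A::real^'n^'n)) = c ^ CARD('n) * det A"
proof -
  have "(\<Prod>i\<in>UNIV. (c *\<^sub>R A)$i$p i) = c ^ CARD('n) * (\<Prod>i\<in>UNIV. A$i$p i)" for p
    by (simp add: prod.distrib)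
  then show ?thesis unfolding det_def by (simp add: sum_distrib_left algebra_simps)
qed

lemma psd_scaleR: "psd A \<Longrightarrow> 0 \<le> c \<Longrightarrow> psd (c *\<^sub>R A)"
  unfolding psd_def by (simp add: scaleR_matrix_vector_assoc[symmetric] transpose_scalar)

lemma psd_mat_1: "psd (mat 1)"
  unfolding psd_def by simp

text \<open>On the segment from the identity to a PSD matrix every matrix is positive definite, hence
  nonsingular; so the determinant cannot change sign between its values 1 and det A.\<close>
lemma psd_det_nonneg:
  fixes A :: "real^'n^'n"
  assumes "psd A"
  shows "0 \<le> det A"
proof (rule ccontr)
  assume neg: "\<not> 0 \<le> det A"
  define B where "B s = (1 - s) *\<^sub>R mat 1 + s *\<^sub>R A" for s :: real
  have "continuous_on {0..1} (\<lambda>s. det (B s))"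
    unfolding B_def det_def by (intro continuous_intros)
  moreover have "det (B 1) \<le> 0" "0 \<le> det (B 0)"
    using neg by (auto simp: B_def)
  ultimately obtain s where s: "0 \<le> s" "s \<le> 1" "det (B s) = 0"
    using IVT2'[of "\<lambda>s. det (B s)" 1 0 0] by auto
  have "s < 1"
    using s neg by (cases "s = 1") (auto simp: B_def)
  have "v = 0" if v: "B s *v v = 0" for v
  proof -
    have "v \<bullet> (B s *v v) = (1 - s) * (v \<bullet> v) + s * (v \<bullet> (A *v v))"
      by (simp add: B_def algebra_simps scaleR_matrix_vector_assoc[symmetric])
    with v have "(1 - s) * (v \<bullet> v) + s * (v \<bullet> (A *v v)) = 0"
      by simp
    moreover have "0 \<le> s * (v \<bullet> (A *v v))"
      using assms s by (simp add: psd_def)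
    ultimately have "(1 - s) * (v \<bullet> v) \<le> 0"
      by linarith
    with \<open>s < 1\<close> have "v \<bullet> v \<le> 0"
      by (simp add: mult_le_0_iff)
    then show "v = 0"
      by (metis inner_eq_zero_iff inner_ge_zero order_antisym)
  qed
  then have "invertible (B s)"
    using matrix_left_invertible_ker invertible_left_inverse by blast
  with s show False
    using invertible_det_nz by blast
qed

lemma psd_det_pos:
  assumes "psd A" "det A \<noteq> 0"
  shows "0 < det A"
  using assms psd_det_nonneg by (metis order_le_less)

lemma pnorm_nonneg: "0 \<le> pnorm p v"
  by (simp add: pnorm_def)

lemma pnorm_scaleR:
  assumes "0 \<le> c" "0 < p"
  shows "pnorm p (c *\<^sub>R v) = c * pnorm p v"
proof -
  have "(\<Sum>j\<in>UNIV. \<bar>(c *\<^sub>R v) $ j\<bar> powr p) = c powr p * (\<Sum>j\<in>UNIV. \<bar>v $ j\<bar> powr p)"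
    using assms by (simp add: abs_mult powr_mult sum_distrib_left)
  moreover have "(c powr p * S) powr (1 / p) = c * S powr (1 / p)" if "0 \<le> S" for S
    using assms that by (simp add: powr_mult powr_powr)
  ultimately show ?thesis
    unfolding pnorm_def by (simp add: sum_nonneg)
qed

lemma sorted_nth_le_iff_card:
  fixes zs :: "'a::linorder list"
  assumes sorted: "sorted zs" and m: "m < length zs"
  shows "zs ! m \<le> t \<longleftrightarrow> m < card {i. i < length zs \<and> zs ! i \<le> t}"
proof
  assume "zs ! m \<le> t"
  have "{..m} \<subseteq> {i. i < length zs \<and> zs ! i \<le> t}"
  proof
    fix i assume "i \<in> {..m}"
    then have "i < length zs" "zs ! i \<le> zs ! m"
      using sorted_nth_mono[OF sorted _ m] m by auto
    with \<open>zs ! m \<le> t\<close> show "i \<in> {i. i < length zs \<and> zs ! i \<le> t}"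
      by simp
  qed
  from card_mono[OF _ this] show "m < card {i. i < length zs \<and> zs ! i \<le> t}"
    by simp
next
  assume card: "m < card {i. i < length zs \<and> zs ! i \<le> t}"
  show "zs ! m \<le> t"
  proof (rule ccontr)
    assume "\<not> zs ! m \<le> t"
    have "{i. i < length zs \<and> zs ! i \<le> t} \<subseteq> {..<m}"
    proof
      fix i assume i: "i \<in> {i. i < length zs \<and> zs ! i \<le> t}"
      show "i \<in> {..<m}"
      proof (rule ccontr)
        assume "i \<notin> {..<m}"
        then have "zs ! m \<le> zs ! i"
          using sorted_nth_mono[OF sorted] i by simp
        with i \<open>\<not> zs ! m \<le> t\<close> show False
          using order_trans by blast
      qed
    qed
    from card_mono[OF _ this] card show False
      by simp
  qed
qed

lemma kth_largest_le_iff: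
  assumes "1 \<le> r" "r \<le> length xs"
  shows "kth_largest r xs \<le> t \<longleftrightarrow> length xs - r + 1 \<le> length (filter (\<lambda>a. a \<le> t) xs)"
proof -
  define zs where "zs = sort xs"
  have "kth_largest r xs = zs ! (length zs - r)"
    using assms by (simp add: kth_largest_def zs_def rev_nth Suc_diff_Suc)
  moreover have "length (filter (\<lambda>a. a \<le> t) xs) = length (filter (\<lambda>a. a \<le> t) zs)"
    by (metis zs_def filter_sort length_sort)
  moreover have "\<dots> = card {i. i < length zs \<and> zs ! i \<le> t}"
    by (simp add: length_filter_conv_card)
  moreover have "length zs - r < length zs"
    using assms by (simp add: zs_def)
  ultimately show ?thesis
    using sorted_nth_le_iff_card[of zs "length zs - r" t] by (simp add: zs_def Suc_le_eq)
qed

lemma kth_largest_nonneg: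
  assumes "\<forall>a\<in>set xs. 0 \<le> a" "1 \<le> r" "r \<le> length xs"
  shows "0 \<le> kth_largest r xs"
proof -
  have "r - 1 < length (rev (sort xs))"
    using assms by simp
  then have "rev (sort xs) ! (r - 1) \<in> set xs"
    by (metis nth_mem set_rev set_sort)
  with assms(1) show ?thesis
    unfolding kth_largest_def by blast
qed

lemma kth_largest_map_mult:
  assumes "1 \<le> r" "r \<le> length xs" "0 < c"
  shows "kth_largest r (map (\<lambda>a. c * a) xs) = c * kth_largest r xs"
proof -
  have key: "kth_largest r (map (\<lambda>a. c * a) xs) \<le> t \<longleftrightarrow> c * kth_largest r xs \<le> t" for t
  proof -
    have "kth_largest r (map (\<lambda>a. c * a) xs) \<le> t \<longleftrightarrow>
        length xs - r + 1 \<le> length (filter (\<lambda>a. a \<le> t) (map (\<lambda>a. c * a) xs))"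
      using kth_largest_le_iff[of r "map (\<lambda>a. c * a) xs"] assms by simp
    also have "length (filter (\<lambda>a. a \<le> t) (map (\<lambda>a. c * a) xs)) =
        length (filter (\<lambda>a. a \<le> t / c) xs)"
      using assms(3) by (simp add: filter_map comp_def pos_le_divide_eq mult.commute)
    also have "length xs - r + 1 \<le> \<dots> \<longleftrightarrow> kth_largest r xs \<le> t / c"
      using kth_largest_le_iff[of r xs] assms by simp
    also have "\<dots> \<longleftrightarrow> c * kth_largest r xs \<le> t"
      using assms(3) by (simp add: pos_le_divide_eq mult.commute)
    finally show ?thesis .
  qed
  show ?thesis
    using key[of "c * kth_largest r xs"] key[of "kth_largest r (map (\<lambda>a. c * a) xs)"]
    by linarith
qed

lemma card_le_eq_length_filter_map:
  "card {i\<in>{1..n}. s i \<le> (t::real)} = length (filter (\<lambda>a. a \<le> t) (map s [1..<n+1]))"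
proof -
  have "length (filter (\<lambda>a. a \<le> t) (map s [1..<n+1])) = length (filter (\<lambda>i. s i \<le> t) [1..<n+1])"
    by (simp add: filter_map comp_def)
  also have "\<dots> = card (set (filter (\<lambda>i. s i \<le> t) [1..<n+1]))"
    by (rule distinct_card[symmetric]) (simp del: upt_Suc)
  also have "set (filter (\<lambda>i. s i \<le> t) [1..<n+1]) = {i\<in>{1..n}. s i \<le> t}"
    by auto
  finally show ?thesis ..
qed

lemma sigma_res_nonneg:
  assumes "1 \<le> r" "r \<le> n"
  shows "0 \<le> sigma_res f x y n r L p \<theta>"
  unfolding sigma_res_def using assms by (intro kth_largest_nonneg) (auto simp: pnorm_nonneg)

lemma sigma_res_scaleR:
  assumes "1 \<le> r" "r \<le> n" "0 < c" "0 < p"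
  shows "sigma_res f x y n r (\<lambda>z. c *\<^sub>R L z) p \<theta> = c * sigma_res f x y n r L p \<theta>"
proof -
  have scaled: "map (\<lambda>i. pnorm p ((c *\<^sub>R L (x i)) *v (y i - f \<theta> (x i)))) [1..<n+1]
      = map (\<lambda>a. c * a) (map (\<lambda>i. pnorm p (L (x i) *v (y i - f \<theta> (x i)))) [1..<n+1])"
    using assms
    by (simp del: upt_Suc add: scaleR_matrix_vector_assoc[symmetric] pnorm_scaleR)
  show ?thesis
    unfolding sigma_res_def scaled by (rule kth_largest_map_mult) (use assms in auto)
qed

lemma feasA_iff_sigma_res_le_1:
  assumes "1 \<le> r" "r \<le> n"
  shows "feasA \<Theta> f x y n r M p \<theta> \<longleftrightarrow>
    (\<forall>z. psd (M z)) \<and> 0 < p \<and> \<theta> \<in> \<Theta> \<and> sigma_res f x y n r M p \<theta> \<le> 1"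
  unfolding feasA_def sigma_res_def card_le_eq_length_filter_map
  using kth_largest_le_iff[of r "map (\<lambda>i. pnorm p (M (x i) *v (y i - f \<theta> (x i)))) [1..<n+1]" 1]
    assms
  by simp

lemma feasA_imp_feasB: "feasA \<Theta> f x y n r M p \<theta> \<Longrightarrow> feasB \<Theta> M p \<theta>"
  by (simp add: feasA_def feasB_def)

lemma unit_ball_vol_pos: "0 < p \<Longrightarrow> 0 < unit_ball_vol p k"
  unfolding unit_ball_vol_def
  by (intro divide_pos_pos mult_pos_pos zero_less_power Gamma_real_pos add_pos_nonneg) auto

lemma objA_nonsingular:
  fixes M :: "real^'d \<Rightarrow> real^'k^'k"
  assumes "\<forall>i\<in>{1..n}. det (M (x i)) \<noteq> 0"
  shows "objA f x n M p \<theta> =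
    ereal (unit_ball_vol p CARD('k) * (\<Sum>i\<in>{1..n}. 1 / det (M (x i))) / real n)"
proof -
  have "(\<Sum>i\<in>{1..n}. vol_ball p (M (x i)) (f \<theta> (x i)))
      = (\<Sum>i\<in>{1..n}. ereal (unit_ball_vol p CARD('k) / det (M (x i))))"
    using assms by (intro sum.cong) (auto simp: vol_ball_def)
  also have "\<dots> = ereal (unit_ball_vol p CARD('k) * (\<Sum>i\<in>{1..n}. 1 / det (M (x i))))"
    by (simp add: sum_distrib_left)
  finally show ?thesis
    unfolding objA_def by simp
qed

lemma objA_singular:
  fixes M :: "real^'d \<Rightarrow> real^'k^'k"
  assumes "\<exists>i\<in>{1..n}. det (M (x i)) = 0"
  shows "objA f x n M p \<theta> = \<infinity>"
proof -
  have "(\<Sum>i\<in>{1..n}. vol_ball p (M (x i)) (f \<theta> (x i))) = \<infinity>"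
    using assms by (subst sum_Pinfty) (auto simp: vol_ball_def)
  moreover have "0 < n"
    using assms by auto
  ultimately show ?thesis
    unfolding objA_def by simp
qed

lemma objA_scaleR:
  fixes L :: "real^'d \<Rightarrow> real^'k^'k"
  assumes "\<forall>i\<in>{1..n}. det (L (x i)) \<noteq> 0" "c \<noteq> 0"
  shows "objA f x n (\<lambda>z. c *\<^sub>R L z) p \<theta> =
    ereal (unit_ball_vol p CARD('k) * (\<Sum>i\<in>{1..n}. 1 / det (L (x i))) / (c ^ CARD('k) * real n))"
proof -
  have "(\<Sum>i\<in>{1..n}. 1 / det (c *\<^sub>R L (x i))) = (\<Sum>i\<in>{1..n}. 1 / det (L (x i))) / c ^ CARD('k)"
    by (simp add: det_scaleR sum_divide_distrib mult.commute)
  then show ?thesis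
    using assms objA_nonsingular[of n "\<lambda>z. c *\<^sub>R L z" x f p \<theta>] by (simp add: det_scaleR)
qed

text \<open>Problem (B) minimises the logarithm of n times the objective of (A); this maps a value
  of (B) back to the corresponding value of (A).\<close>
definition exp_div :: "nat \<Rightarrow> ereal \<Rightarrow> ereal" where
  "exp_div n v = (case v of ereal b \<Rightarrow> ereal (exp b / real n) | PInfty \<Rightarrow> \<infinity> | MInfty \<Rightarrow> 0)"

lemma exp_div_simps [simp]:
  "exp_div n (ereal b) = ereal (exp b / real n)" "exp_div n \<infinity> = \<infinity>" "exp_div n (-\<infinity>) = 0"
  by (simp_all add: exp_div_def)

lemma exp_div_nonneg: "0 \<le> exp_div n v"
  by (cases v) auto

lemma exp_div_mono: "a \<le> b \<Longrightarrow> exp_div n a \<le> exp_div n b"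
  by (cases a; cases b) (auto intro: divide_right_mono)

lemma exp_div_INF:
  assumes "0 < n"
  shows "exp_div n (INF s\<in>S. h s) = (INF s\<in>S. exp_div n (h s))"
proof (rule antisym)
  show "exp_div n (INF s\<in>S. h s) \<le> (INF s\<in>S. exp_div n (h s))"
    by (intro INF_greatest exp_div_mono INF_lower)
  show "(INF s\<in>S. exp_div n (h s)) \<le> exp_div n (INF s\<in>S. h s)"
  proof (rule dense_ge)
    fix u assume u: "exp_div n (INF s\<in>S. h s) < u"
    show "(INF s\<in>S. exp_div n (h s)) \<le> u"
    proof (cases u)
      case (real t)
      with u exp_div_nonneg have "0 < t"
        by (metis le_less_trans less_ereal.simps(1) zero_ereal_def)
      define b where "b = ln (t * real n)"
      have b: "exp_div n (ereal b) = u"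
        using \<open>0 < t\<close> assms real by (simp add: b_def)
      with u have "(INF s\<in>S. h s) < ereal b"
        using exp_div_mono not_le by metis
      then obtain s where "s \<in> S" "h s < ereal b"
        by (auto simp: INF_less_iff)
      then show ?thesis
        using b exp_div_mono by (metis INF_lower2 less_imp_le)
    qed (use u in auto)
  qed
qed

lemma exp_div_objB:
  fixes L :: "real^'d \<Rightarrow> real^'k^'k"
  assumes "1 \<le> n" "\<forall>i\<in>{1..n}. 0 < det (L (x i))" "0 < sigma_res f x y n r L p \<theta>" "0 < p"
  shows "exp_div n (objB f x y n r L p \<theta>) = ereal (unit_ball_vol p CARD('k) *
    (\<Sum>i\<in>{1..n}. 1 / det (L (x i))) * sigma_res f x y n r L p \<theta> ^ CARD('k) / real n)"
proof -
  define S where "S = (\<Sum>i\<in>{1..n}. 1 / det (L (x i)))"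
  define \<sigma> where "\<sigma> = sigma_res f x y n r L p \<theta>"
  define V where "V = unit_ball_vol p CARD('k)"
  have "0 < S" "0 < \<sigma>" "0 < V"
    using assms unit_ball_vol_pos by (auto simp: S_def \<sigma>_def V_def intro!: sum_pos)
  moreover have "objB f x y n r L p \<theta> = ereal (ln S + real CARD('k) * ln \<sigma> + ln V)"
    using assms unfolding objB_def S_def \<sigma>_def V_def by auto
  ultimately show ?thesis
    by (simp add: exp_add exp_of_nat_mult S_def \<sigma>_def V_def mult_ac)
qed

lemma feasA_objA_rescale_by_sigma_res:
  fixes L :: "real^'d \<Rightarrow> real^'k^'k"
  assumes r: "1 \<le> r" "r \<le> n" and "feasB \<Theta> L p \<theta>"
    and nonsing: "\<forall>i\<in>{1..n}. det (L (x i)) \<noteq> 0" and "0 < sigma_res f x y n r L p \<theta>"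
  shows "feasA \<Theta> f x y n r (\<lambda>z. (1 / sigma_res f x y n r L p \<theta>) *\<^sub>R L z) p \<theta> \<and>
    objA f x n (\<lambda>z. (1 / sigma_res f x y n r L p \<theta>) *\<^sub>R L z) p \<theta> = exp_div n (objB f x y n r L p \<theta>)"
proof -
  define \<sigma> where "\<sigma> = sigma_res f x y n r L p \<theta>"
  have L: "\<forall>z. psd (L z)" "0 < p" "\<theta> \<in> \<Theta>" and "0 < \<sigma>"
    using assms by (auto simp: feasB_def \<sigma>_def)
  then have "sigma_res f x y n r (\<lambda>z. (1 / \<sigma>) *\<^sub>R L z) p \<theta> = 1"
    using sigma_res_scaleR[OF r, of "1 / \<sigma>" p f x y L \<theta>] by (simp add: \<sigma>_def)
  then have "feasA \<Theta> f x y n r (\<lambda>z. (1 / \<sigma>) *\<^sub>R L z) p \<theta>"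
    using L \<open>0 < \<sigma>\<close> by (simp add: feasA_iff_sigma_res_le_1[OF r] psd_scaleR)
  moreover have "objA f x n (\<lambda>z. (1 / \<sigma>) *\<^sub>R L z) p \<theta> = exp_div n (objB f x y n r L p \<theta>)"
  proof -
    have "\<forall>i\<in>{1..n}. 0 < det (L (x i))"
      using L nonsing psd_det_pos by blast
    then show ?thesis
      using objA_scaleR[of n L x "1 / \<sigma>" f p \<theta>] exp_div_objB[of n L x f y r p \<theta>]
        assms L \<open>0 < \<sigma>\<close> by (simp add: \<sigma>_def power_divide mult_ac)
  qed
  ultimately show ?thesis
    by (simp add: \<sigma>_def)
qed

lemma exp_div_objB_le_objA:
  fixes M :: "real^'d \<Rightarrow> real^'k^'k"
  assumes r: "1 \<le> r" "r \<le> n" and feas: "feasA \<Theta> f x y n r M p \<theta>"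
  shows "exp_div n (objB f x y n r M p \<theta>) \<le> objA f x n M p \<theta>"
proof (cases "\<exists>i\<in>{1..n}. det (M (x i)) = 0")
  case True
  then show ?thesis
    by (simp add: objA_singular)
next
  case False
  define S where "S = (\<Sum>i\<in>{1..n}. 1 / det (M (x i)))"
  define V where "V = unit_ball_vol p CARD('k)"
  define \<sigma> where "\<sigma> = sigma_res f x y n r M p \<theta>"
  have M: "\<forall>z. psd (M z)" "0 < p" "\<sigma> \<le> 1"
    using feas by (auto simp: feasA_iff_sigma_res_le_1[OF r] \<sigma>_def)
  with False have dets: "\<forall>i\<in>{1..n}. 0 < det (M (x i))"
    using psd_det_pos by blast
  with r M have "0 < S" "0 < V"
    by (auto simp: S_def V_def unit_ball_vol_pos intro!: sum_pos)
  have objA: "objA f x n M p \<theta> = ereal (V * S / real n)"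
    using False by (simp add: objA_nonsingular S_def V_def)
  show ?thesis
  proof (cases "\<sigma> = 0")
    case True
    with False have "objB f x y n r M p \<theta> = -\<infinity>"
      by (simp add: objB_def \<sigma>_def)
    with objA \<open>0 < S\<close> \<open>0 < V\<close> show ?thesis
      by simp
  next
    case False
    with sigma_res_nonneg[OF r] have "0 < \<sigma>"
      by (metis order_le_less \<sigma>_def)
    then have "exp_div n (objB f x y n r M p \<theta>) = ereal (V * S * \<sigma> ^ CARD('k) / real n)"
      using exp_div_objB[of n M x f y r p \<theta>] r dets M by (simp add: S_def V_def \<sigma>_def)
    moreover have "V * S * \<sigma> ^ CARD('k) / real n \<le> V * S / real n"
      using \<open>0 < S\<close> \<open>0 < V\<close> \<open>0 < \<sigma>\<close> M
      by (intro divide_right_mono mult_left_le) (auto simp: power_le_one)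
    ultimately show ?thesis
      using objA by simp
  qed
qed

lemma valA_le_objA: "feasA \<Theta> f x y n r M p \<theta> \<Longrightarrow> valA \<Theta> f x y n r \<le> objA f x n M p \<theta>"
  unfolding valA_def by (rule INF_lower2[of "(M, p, \<theta>)"]) auto

lemma valB_le_objB: "feasB \<Theta> L p \<theta> \<Longrightarrow> valB \<Theta> f x y n r \<le> objB f x y n r L p \<theta>"
  unfolding valB_def by (rule INF_lower2[of "(L, p, \<theta>)"]) auto

lemma valA_le_0_if_sigma_res_0:
  fixes L :: "real^'d \<Rightarrow> real^'k^'k"
  assumes r: "1 \<le> r" "r \<le> n" and "feasB \<Theta> L p \<theta>"
    and nonsing: "\<forall>i\<in>{1..n}. det (L (x i)) \<noteq> 0" and "sigma_res f x y n r L p \<theta> = 0"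
  shows "valA \<Theta> f x y n r \<le> 0"
proof (rule ereal_le_epsilon2)
  fix e :: real assume "0 < e"
  define S where "S = (\<Sum>i\<in>{1..n}. 1 / det (L (x i)))"
  define V where "V = unit_ball_vol p CARD('k)"
  define c where "c = max 1 (V * S / (real n * e))"
  have L: "\<forall>z. psd (L z)" "0 < p" "\<theta> \<in> \<Theta>"
    using assms by (auto simp: feasB_def)
  with nonsing have "\<forall>i\<in>{1..n}. 0 < det (L (x i))"
    using psd_det_pos by blast
  with r L have "0 < S" "0 < V"
    by (auto simp: S_def V_def unit_ball_vol_pos intro!: sum_pos)
  have "1 \<le> c"
    by (simp add: c_def)
  then have "sigma_res f x y n r (\<lambda>z. c *\<^sub>R L z) p \<theta> = 0"
    using sigma_res_scaleR[OF r, of c p f x y L \<theta>] assms L by simp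
  with L \<open>1 \<le> c\<close> have "feasA \<Theta> f x y n r (\<lambda>z. c *\<^sub>R L z) p \<theta>"
    by (simp add: feasA_iff_sigma_res_le_1[OF r] psd_scaleR)
  moreover have "objA f x n (\<lambda>z. c *\<^sub>R L z) p \<theta> = ereal (V * S / (c ^ CARD('k) * real n))"
    using objA_scaleR[OF nonsing, of c f p \<theta>] \<open>1 \<le> c\<close> by (simp add: S_def V_def)
  moreover have "V * S / (c ^ CARD('k) * real n) \<le> e"
  proof -
    have "V * S / (real n * e) \<le> c" "0 < real n * e"
      using r \<open>0 < e\<close> by (auto simp: c_def)
    then have "V * S \<le> real n * e * c"
      by (simp add: pos_divide_le_eq mult_ac)
    also have "\<dots> \<le> real n * e * c ^ CARD('k)"
      using \<open>1 \<le> c\<close> \<open>0 < e\<close>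
      by (intro mult_left_mono) (auto intro: power_increasing[of 1, simplified])
    finally show ?thesis
      using r \<open>1 \<le> c\<close> by (simp add: divide_le_eq mult_ac)
  qed
  ultimately show "valA \<Theta> f x y n r \<le> 0 + ereal e"
    using valA_le_objA by (metis order_trans ereal_less_eq(3) add.left_neutral)
qed

lemma valA_le_exp_div_objB:
  fixes L :: "real^'d \<Rightarrow> real^'k^'k"
  assumes r: "1 \<le> r" "r \<le> n" and feas: "feasB \<Theta> L p \<theta>"
  shows "valA \<Theta> f x y n r \<le> exp_div n (objB f x y n r L p \<theta>)"
proof (cases "\<exists>i\<in>{1..n}. det (L (x i)) = 0")
  case True
  then show ?thesis
    by (simp add: objB_def)
next
  case False
  then have nonsing: "\<forall>i\<in>{1..n}. det (L (x i)) \<noteq> 0"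
    by blast
  show ?thesis
  proof (cases "sigma_res f x y n r L p \<theta> = 0")
    case True
    then show ?thesis
      using False valA_le_0_if_sigma_res_0[OF r feas nonsing] by (simp add: objB_def)
  next
    case False
    with sigma_res_nonneg[OF r] have "0 < sigma_res f x y n r L p \<theta>"
      by (metis order_le_less)
    then show ?thesis
      using feasA_objA_rescale_by_sigma_res[OF r feas nonsing] valA_le_objA by metis
  qed
qed

lemma valA_eq_exp_div_valB:
  assumes r: "1 \<le> r" "r \<le> n"
  shows "valA \<Theta> f x y n r = exp_div n (valB \<Theta> f x y n r)"
proof -
  let ?B = "{(L, p, \<theta>). feasB \<Theta> L p \<theta>}"
  have "valA \<Theta> f x y n r = (INF (L, p, \<theta>)\<in>?B. exp_div n (objB f x y n r L p \<theta>))"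
  proof (rule antisym)
    show "valA \<Theta> f x y n r \<le> (INF (L, p, \<theta>)\<in>?B. exp_div n (objB f x y n r L p \<theta>))"
      by (rule INF_greatest) (auto intro: valA_le_exp_div_objB[OF r])
    show "(INF (L, p, \<theta>)\<in>?B. exp_div n (objB f x y n r L p \<theta>)) \<le> valA \<Theta> f x y n r"
      unfolding valA_def
    proof (rule INF_greatest, clarify)
      fix M p \<theta> assume "feasA \<Theta> f x y n r M p \<theta>"
      then show "(INF (L, p, \<theta>)\<in>?B. exp_div n (objB f x y n r L p \<theta>)) \<le> objA f x n M p \<theta>"
        using exp_div_objB_le_objA[OF r] feasA_imp_feasB
        by (intro INF_lower2[of "(M, p, \<theta>)"]) auto
    qed
  qed
  also have "\<dots> = exp_div n (valB \<Theta> f x y n r)"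
    unfolding valB_def using r by (subst exp_div_INF) (auto simp: case_prod_beta)
  finally show ?thesis .
qed

lemma optA_rescale_optB:
  assumes r: "1 \<le> r" "r \<le> n"
    and opt: "optB \<Theta> f x y n r L p \<theta>" and "sigma_res f x y n r L p \<theta> \<noteq> 0"
  shows "optA \<Theta> f x y n r (\<lambda>z. (1 / sigma_res f x y n r L p \<theta>) *\<^sub>R L z) p \<theta>"
proof -
  have feas: "feasB \<Theta> L p \<theta>"
    and le: "\<And>L' p' \<theta>'. feasB \<Theta> L' p' \<theta>' \<Longrightarrow> objB f x y n r L p \<theta> \<le> objB f x y n r L' p' \<theta>'"
    using opt by (auto simp: optB_def)
  have "feasB \<Theta> (\<lambda>_. mat 1) p \<theta>"
    using feas by (simp add: feasB_def psd_mat_1)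
  moreover have "objB f x y n r (\<lambda>_. mat 1) p \<theta> \<noteq> \<infinity>"
    by (simp add: objB_def)
  ultimately have "objB f x y n r L p \<theta> \<noteq> \<infinity>"
    using le by fastforce
  then have nonsing: "\<forall>i\<in>{1..n}. det (L (x i)) \<noteq> 0"
    unfolding objB_def by (metis (no_types, lifting))
  have "0 < sigma_res f x y n r L p \<theta>"
    using assms sigma_res_nonneg[OF r] by (metis order_le_less)
  note rescaled = feasA_objA_rescale_by_sigma_res[OF r feas nonsing this]
  have "objB f x y n r L p \<theta> = valB \<Theta> f x y n r"
  proof (rule antisym)
    show "objB f x y n r L p \<theta> \<le> valB \<Theta> f x y n r"
      unfolding valB_def by (rule INF_greatest) (auto intro: le)
  qed (rule valB_le_objB[OF feas])
  then show ?thesis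
    using rescaled valA_eq_exp_div_valB[OF r, of \<Theta> f x y] valA_le_objA[of \<Theta> f x y n r]
    by (auto simp: optA_def)
qed

theorem proposition3:
  fixes \<Theta> :: "'t set"
    and f :: "'t \<Rightarrow> real^'d \<Rightarrow> real^'k"
    and x :: "nat \<Rightarrow> real^'d" and y :: "nat \<Rightarrow> real^'k"
    and n r :: nat
  assumes "1 \<le> r" and "r \<le> n"
  shows "valA \<Theta> f x y n r =
           (case valB \<Theta> f x y n r of
              ereal b \<Rightarrow> ereal (exp b / real n)
            | PInfty \<Rightarrow> \<infinity>
            | MInfty \<Rightarrow> 0)
         \<and> (\<forall>L p \<theta>. optB \<Theta> f x y n r L p \<theta> \<and> sigma_res f x y n r L p \<theta> \<noteq> 0 \<longrightarrow>
           optA \<Theta> f x y n r (\<lambda>z. (1 / sigma_res f x y n r L p \<theta>) *\<^sub>R L z) p \<theta>)"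
  using valA_eq_exp_div_valB[OF assms] optA_rescale_optB[OF assms] by (auto simp: exp_div_def)

end
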